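(* Let $p\ge3$ be a prime, let $d\ge2$, let $D$ be a probability distribution on $\mathbb{F}_p$, let $P:\mathbb{F}_p^n\to\mathbb{F}_p$ be a polynomial of degree at most $d$, and let $\{X_1,\dots,X_d\}$ be a partition of $[n]$. Then \[|\mathbb{E}_{x\sim D^n}\omega_p^{P(x)}|^{2^d}\le\mathbb{E}_{x\sim(D-D)^n}\omega_p^{P_{\{X_1,\dots,X_d\}}(x)}.\]
   Context: $\omega_p=\exp(2\pi i/p)$. $D^n$ denotes the product distribution with independent coordinates distributed according to $D$; $D-D$ is the distribution of $u-v$ for independent $u,v\sim D$. Writing $P$ as a linear combination of monomials $a\prod_{u=1}^n x_u^{s_u}$ with $a\ne0$, $P_{\{X_1,\dots,X_d\}}$ is the polynomial obtained by keeping only those monomials such that for each $i\in[d]$ there is $u\in X_i$ with $s_u\ge1$. *)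

theory Defs
  imports Complex_Main "HOL-Computational_Algebra.Primes" "HOL-Library.FuncSet" "HOL-Library.Complex_Order"
begin

text \<open>F_p is represented by the integers {0..<p}; arithmetic is mod p.
  A polynomial over F_p in variables x_0..x_{n-1} is given by a finite set M of
  exponent vectors s :: nat => nat (s u = 0 for u >= n) and coefficients c s :: int
  (read mod p). The monomial a * prod x_u^(s u) is present iff c s mod p \<noteq> 0.\<close>

definition omega :: "nat \<Rightarrow> int \<Rightarrow> complex" where
  "omega p k = cis (2 * pi * of_int k / of_nat p)"

definition Fp_vecs :: "nat \<Rightarrow> nat \<Rightarrow> (nat \<Rightarrow> int) set" where
  "Fp_vecs p n = PiE {..<n} (\<lambda>_. {0..<int p})"

definition poly_eval :: "nat \<Rightarrow> (nat \<Rightarrow> nat) set \<Rightarrow> ((nat \<Rightarrow> nat) \<Rightarrow> int)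
    \<Rightarrow> (nat \<Rightarrow> int) \<Rightarrow> int" where
  "poly_eval n M c x = (\<Sum>s\<in>M. c s * (\<Prod>u<n. x u ^ s u))"

definition is_poly_deg_le :: "nat \<Rightarrow> nat \<Rightarrow> (nat \<Rightarrow> nat) set \<Rightarrow> ((nat \<Rightarrow> nat) \<Rightarrow> int)
    \<Rightarrow> nat \<Rightarrow> bool" where
  "is_poly_deg_le p n M c d \<longleftrightarrow> finite M \<and> (\<forall>s\<in>M. \<forall>u\<ge>n. s u = 0)
     \<and> (\<forall>s\<in>M. c s mod int p \<noteq> 0 \<longrightarrow> (\<Sum>u<n. s u) \<le> d)"

text \<open>P_{X_1..X_d}: keep monomials with nonzero coefficient meeting every part.\<close>
definition restrict_mons :: "nat \<Rightarrow> (nat \<Rightarrow> nat) set \<Rightarrow> ((nat \<Rightarrow> nat) \<Rightarrow> int)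
    \<Rightarrow> nat \<Rightarrow> (nat \<Rightarrow> nat set) \<Rightarrow> (nat \<Rightarrow> nat) set" where
  "restrict_mons p M c d X =
     {s\<in>M. c s mod int p \<noteq> 0 \<and> (\<forall>i<d. \<exists>u\<in>X i. s u \<ge> 1)}"

definition is_partition :: "nat \<Rightarrow> nat \<Rightarrow> (nat \<Rightarrow> nat set) \<Rightarrow> bool" where
  "is_partition n d X \<longleftrightarrow> (\<forall>i<d. X i \<noteq> {}) \<and>
     (\<forall>i<d. \<forall>j<d. i \<noteq> j \<longrightarrow> X i \<inter> X j = {}) \<and> (\<Union>i<d. X i) = {..<n}"

definition is_distr :: "nat \<Rightarrow> (int \<Rightarrow> real) \<Rightarrow> bool" where
  "is_distr p D \<longleftrightarrow> (\<forall>a\<in>{0..<int p}. D a \<ge> 0) \<and> (\<Sum>a\<in>{0..<int p}. D a) = 1"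

definition diff_distr :: "nat \<Rightarrow> (int \<Rightarrow> real) \<Rightarrow> int \<Rightarrow> real" where
  "diff_distr p D z = (\<Sum>a\<in>{0..<int p}. \<Sum>b\<in>{0..<int p}.
       if (a - b) mod int p = z then D a * D b else 0)"

definition expect_prod :: "nat \<Rightarrow> nat \<Rightarrow> (int \<Rightarrow> real) \<Rightarrow> ((nat \<Rightarrow> int) \<Rightarrow> complex) \<Rightarrow> complex" where
  "expect_prod p n D f = (\<Sum>x\<in>Fp_vecs p n. of_real (\<Prod>u<n. D (x u)) * f x)"

end

theory Submission
  imports Defs "HOL-Library.Disjoint_Sets"
begin

text \<open>
  Let x' be an independent copy of x ~ D^n and, for T \<subseteq> {..<d}, let x_T agree with x' on
  the parts X i with i \<in> T and with x elsewhere. Resampling the block X k from a fresh copy and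
  applying Cauchy-Schwarz twice shows that the box averages
  B_k f = E (\<Prod>T \<subseteq> {..<k}. conj^|T| (f x_T)) satisfy |B_k f|^2 \<le> B_(k+1) f, the latter
  being real and nonnegative; hence |E f|^(2^d) \<le> B_d f.

  For f = \<omega>^P the product in B_d f is \<omega> to the alternating sum \<Sum>T. (-1)^|T| P(x_T).
  A monomial missing some part X i cancels in this sum, while a monomial of degree at most d
  meeting all d parts is a product of one variable from each part and contributes its value
  at x - x'. So B_d f is the expectation of \<omega>^P'(x - x') for the restricted polynomial P',
  i.e. an expectation over (D - D)^n.
\<close>

section \<open>Expectations over product distributions\<close>

definition prod_weight :: "'i set \<Rightarrow> ('a \<Rightarrow> real) \<Rightarrow> ('i \<Rightarrow> 'a) \<Rightarrow> real" where
  "prod_weight I D x = (\<Prod>u\<in>I. D (x u))"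

definition prod_expectation :: "'i set \<Rightarrow> 'a set \<Rightarrow> ('a \<Rightarrow> real)
    \<Rightarrow> (('i \<Rightarrow> 'a) \<Rightarrow> 'b::real_vector) \<Rightarrow> 'b" where
  "prod_expectation I A D f = (\<Sum>x\<in>PiE I (\<lambda>_. A). prod_weight I D x *\<^sub>R f x)"

locale product_distribution =
  fixes I :: "'i set" and A :: "'a set" and D :: "'a \<Rightarrow> real"
  assumes finite_index: "finite I" and finite_values: "finite A"
    and D_nonneg: "\<And>a. a \<in> A \<Longrightarrow> 0 \<le> D a" and sum_D: "(\<Sum>a\<in>A. D a) = 1"
begin

abbreviation vecs :: "('i \<Rightarrow> 'a) set" where
  "vecs \<equiv> PiE I (\<lambda>_. A)"

abbreviation weight :: "('i \<Rightarrow> 'a) \<Rightarrow> real" where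
  "weight \<equiv> prod_weight I D"

abbreviation E :: "(('i \<Rightarrow> 'a) \<Rightarrow> 'b::real_vector) \<Rightarrow> 'b" where
  "E \<equiv> prod_expectation I A D"

lemma weight_nonneg: "x \<in> vecs \<Longrightarrow> 0 \<le> weight x"
  unfolding prod_weight_def by (intro prod_nonneg) (auto simp: D_nonneg PiE_iff)

lemma sum_weight: "(\<Sum>x\<in>vecs. weight x) = 1"
proof -
  have "(\<Sum>x\<in>vecs. weight x) = (\<Prod>u\<in>I. \<Sum>a\<in>A. D a)"
    unfolding prod_weight_def using finite_index finite_values by (subst prod_sum_PiE) auto
  then show ?thesis by (simp add: sum_D)
qed

lemma E_const [simp]: "E (\<lambda>_. c) = c"
  unfolding prod_expectation_def by (simp flip: scaleR_sum_left add: sum_weight)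

lemma E_add: "E (\<lambda>x. f x + g x) = E f + E g"
  unfolding prod_expectation_def by (simp add: scaleR_add_right sum.distrib)

lemma E_diff: "E (\<lambda>x. f x - g x) = E f - E g"
  unfolding prod_expectation_def by (simp add: scaleR_diff_right sum_subtractf)

lemma E_mult_left: "E (\<lambda>x. c * f x) = c * (E f :: 'b::real_algebra)"
  unfolding prod_expectation_def by (simp add: sum_distrib_left)

lemma E_of_real: "E (\<lambda>x. of_real (g x)) = (of_real (E g) :: 'b::real_algebra_1)"
  unfolding prod_expectation_def by (simp add: of_real_sum scaleR_conv_of_real)

lemma cnj_E: "cnj (E f) = E (\<lambda>x. cnj (f x))"
  unfolding prod_expectation_def by (simp add: cnj_sum scaleR_conv_of_real)

lemma E_mult_E:
  fixes f g :: "('i \<Rightarrow> 'a) \<Rightarrow> 'b::real_algebra"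
  shows "E f * E g = E (\<lambda>y. E (\<lambda>y'. f y * g y'))"
  unfolding prod_expectation_def sum_product by (simp add: scaleR_sum_right ac_simps)

lemma E_swap: "E (\<lambda>x. E (\<lambda>y. h x y)) = E (\<lambda>y. E (\<lambda>x. h x y))"
  unfolding prod_expectation_def scaleR_sum_right by (subst sum.swap) (simp add: ac_simps)

lemma E_mono:
  fixes f g :: "('i \<Rightarrow> 'a) \<Rightarrow> real"
  shows "(\<And>x. x \<in> vecs \<Longrightarrow> f x \<le> g x) \<Longrightarrow> E f \<le> E g"
  unfolding prod_expectation_def by (intro sum_mono scaleR_left_mono) (auto simp: weight_nonneg)

lemma E_nonneg:
  fixes f :: "('i \<Rightarrow> 'a) \<Rightarrow> real"
  shows "(\<And>x. x \<in> vecs \<Longrightarrow> 0 \<le> f x) \<Longrightarrow> 0 \<le> E f"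
  using E_mono[of "\<lambda>_. 0" f] by simp

lemma norm_E_le: "norm (E f) \<le> E (\<lambda>x. norm (f x))"
  unfolding prod_expectation_def by (rule order.trans[OF norm_sum]) (simp add: weight_nonneg)

lemma E_squared_le:
  fixes g :: "('i \<Rightarrow> 'a) \<Rightarrow> real"
  shows "(E g)\<^sup>2 \<le> E (\<lambda>x. (g x)\<^sup>2)"
proof -
  have "0 \<le> E (\<lambda>x. (g x - E g)\<^sup>2)"
    by (intro E_nonneg) simp
  also have "\<dots> = E (\<lambda>x. (g x)\<^sup>2 - 2 * E g * g x + (E g)\<^sup>2)"
    by (simp add: power2_diff algebra_simps)
  also have "\<dots> = E (\<lambda>x. (g x)\<^sup>2) - (E g)\<^sup>2"
    by (simp add: E_add E_diff E_mult_left power2_eq_square)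
  finally show ?thesis by simp
qed

lemma norm_E_squared_le:
  fixes f :: "('i \<Rightarrow> 'a) \<Rightarrow> 'b::real_normed_vector"
  shows "(norm (E f))\<^sup>2 \<le> E (\<lambda>x. (norm (f x))\<^sup>2)"
proof -
  have "(norm (E f))\<^sup>2 \<le> (E (\<lambda>x. norm (f x)))\<^sup>2"
    by (intro power_mono norm_E_le norm_ge_zero)
  also have "\<dots> \<le> E (\<lambda>x. (norm (f x))\<^sup>2)"
    by (rule E_squared_le)
  finally show ?thesis .
qed

lemma override_on_in_vecs: "x \<in> vecs \<Longrightarrow> y \<in> vecs \<Longrightarrow> override_on x y S \<in> vecs"
  by (auto simp: PiE_iff override_on_def extensional_def)

lemma weight_override_on:
  "weight (override_on x y S) * weight (override_on y x S) = weight x * weight y"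
  unfolding prod_weight_def prod.distrib[symmetric] by (intro prod.cong) (auto simp: override_on_def)

text \<open>The involution (x, y) \<mapsto> (override_on x y S, override_on y x S) of vecs \<times> vecs
  preserves the weight.\<close>
lemma E_resample: "E (\<lambda>x. E (\<lambda>y. g (override_on x y S))) = E g"
proof -
  let ?swap = "\<lambda>(x, y). (override_on x y S, override_on y x S)"
  let ?h = "\<lambda>(x, y). (weight x * weight y) *\<^sub>R g x"
  have inv: "override_on (override_on x y S) (override_on y x S) S = x" for x y
    by (auto simp: override_on_def)
  have bij: "bij_betw ?swap (vecs \<times> vecs) (vecs \<times> vecs)"
    using override_on_in_vecs by (intro bij_betwI[where g = ?swap]) (auto simp: inv)
  have "E (\<lambda>x. E (\<lambda>y. g (override_on x y S))) = (\<Sum>z\<in>vecs \<times> vecs. ?h (?swap z))"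
    unfolding prod_expectation_def scaleR_sum_right sum.cartesian_product
    by (intro sum.cong) (auto simp: weight_override_on)
  also have "\<dots> = (\<Sum>z\<in>vecs \<times> vecs. ?h z)"
    by (rule sum.reindex_bij_betw[OF bij])
  also have "\<dots> = E g"
    unfolding prod_expectation_def sum.cartesian_product[symmetric]
    by (simp add: scaleR_sum_left[symmetric] sum_weight flip: sum_distrib_left)
  finally show ?thesis .
qed

lemma E_E_coordinatewise_map:
  fixes g :: "('i \<Rightarrow> 'b) \<Rightarrow> 'c::real_vector"
  assumes "finite B" and "\<And>a a'. a \<in> A \<Longrightarrow> a' \<in> A \<Longrightarrow> \<phi> a a' \<in> B"
  shows "E (\<lambda>x. E (\<lambda>x'. g (\<lambda>u\<in>I. \<phi> (x u) (x' u))))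
    = prod_expectation I B (\<lambda>b. \<Sum>a\<in>A. \<Sum>a'\<in>A. if \<phi> a a' = b then D a * D a' else 0) g"
proof -
  define D' where "D' b = (\<Sum>a\<in>A. \<Sum>a'\<in>A. if \<phi> a a' = b then D a * D a' else 0)" for b
  define \<psi> where "\<psi> x x' = (\<lambda>u\<in>I. \<phi> (x u) (x' u))" for x x' :: "'i \<Rightarrow> 'a"
  let ?B = "PiE I (\<lambda>_. B)"
  let ?P = "\<lambda>x x' y. weight x * weight x' * (if \<psi> x x' = y then 1 else 0)"
  have \<psi>_in: "\<psi> x x' \<in> ?B" if "x \<in> vecs" "x' \<in> vecs" for x x'
    using that assms(2) by (auto simp: \<psi>_def PiE_iff)
  have fibre: "(\<Sum>x\<in>vecs. \<Sum>x'\<in>vecs. ?P x x' y) = (\<Prod>u\<in>I. D' (y u))" if "y \<in> ?B" for y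
  proof -
    have "(\<psi> x x' = y) = (\<forall>u\<in>I. \<phi> (x u) (x' u) = y u)" for x x'
      using that by (auto simp: \<psi>_def PiE_iff extensional_def fun_eq_iff)
    then have "?P x x' y = (\<Prod>u\<in>I. D (x u) * (D (x' u) * (if \<phi> (x u) (x' u) = y u then 1 else 0)))"
      for x x'
      using finite_index by (simp add: prod_weight_def prod.distrib prod_zero mult.assoc)
    then have "(\<Sum>x\<in>vecs. \<Sum>x'\<in>vecs. ?P x x' y)
        = (\<Sum>x\<in>vecs. \<Sum>x'\<in>vecs. \<Prod>u\<in>I. D (x u) * (D (x' u) * (if \<phi> (x u) (x' u) = y u then 1 else 0)))"
      by simp
    also have "\<dots> = (\<Prod>u\<in>I. \<Sum>a\<in>A. \<Sum>a'\<in>A. D a * (D a' * (if \<phi> a a' = y u then 1 else 0)))"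
      using finite_index finite_values by (simp add: prod_sum_PiE)
    also have "\<dots> = (\<Prod>u\<in>I. D' (y u))"
      unfolding D'_def by (intro prod.cong sum.cong) auto
    finally show ?thesis .
  qed
  have "E (\<lambda>x. E (\<lambda>x'. g (\<psi> x x'))) = (\<Sum>x\<in>vecs. \<Sum>x'\<in>vecs. \<Sum>y\<in>?B. ?P x x' y *\<^sub>R g y)"
    unfolding prod_expectation_def scaleR_sum_right
    using finite_PiE[OF finite_index assms(1)] \<psi>_in
    by (intro sum.cong refl) (simp add: if_distrib if_distribR sum.delta' cong: if_cong)
  also have "\<dots> = (\<Sum>y\<in>?B. (\<Sum>x\<in>vecs. \<Sum>x'\<in>vecs. ?P x x' y) *\<^sub>R g y)"
    by (simp add: scaleR_sum_left sum.swap[of _ vecs ?B] sum.swap[of _ vecs ?B])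
  also have "\<dots> = prod_expectation I B D' g"
    unfolding prod_expectation_def by (intro sum.cong refl) (simp add: fibre prod_weight_def[of I D'])
  finally show ?thesis
    unfolding D'_def \<psi>_def .
qed

end

section \<open>Box averages\<close>

definition box_product :: "(('i \<Rightarrow> 'a) \<Rightarrow> complex) \<Rightarrow> (nat \<Rightarrow> 'i set) \<Rightarrow> nat
    \<Rightarrow> ('i \<Rightarrow> 'a) \<Rightarrow> ('i \<Rightarrow> 'a) \<Rightarrow> complex" where
  "box_product f X k x x' =
     (\<Prod>T\<in>Pow {..<k}. (cnj ^^ card T) (f (override_on x x' (\<Union>(X ` T)))))"

lemma box_product_0 [simp]: "box_product f X 0 x x' = f x"
  by (simp add: box_product_def)

lemma box_product_Suc:
  "box_product f X (Suc k) x x' =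
     box_product f X k x x' * cnj (box_product f X k (override_on x x' (X k)) x')"
proof -
  have Pow_Suc: "Pow {..<Suc k} = Pow {..<k} \<union> insert k ` Pow {..<k}"
    by (simp add: lessThan_Suc Pow_insert)
  have inj: "inj_on (insert k) (Pow {..<k})"
    by (rule inj_onI) (metis Pow_iff insert_ident lessThan_iff less_irrefl subsetD)
  have "(cnj ^^ card (insert k T)) (f (override_on x x' (\<Union>(X ` insert k T))))
      = cnj ((cnj ^^ card T) (f (override_on (override_on x x' (X k)) x' (\<Union>(X ` T)))))"
    if "T \<in> Pow {..<k}" for T
  proof -
    from that have "card (insert k T) = Suc (card T)"
      by (auto simp: finite_subset card_insert_if)
    moreover have "override_on x x' (\<Union>(X ` insert k T))
        = override_on (override_on x x' (X k)) x' (\<Union>(X ` T))"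
      by (auto simp: override_on_def)
    ultimately show ?thesis by simp
  qed
  then show ?thesis
    unfolding box_product_def Pow_Suc
    by (subst prod.union_disjoint) (auto simp: prod.reindex[OF inj] cnj_prod)
qed

lemma box_product_override_on:
  assumes "\<And>i. i < k \<Longrightarrow> X i \<inter> S = {}"
  shows "box_product f X k x (override_on x' y S) = box_product f X k x x'"
proof -
  have "override_on x (override_on x' y S) (\<Union>(X ` T)) = override_on x x' (\<Union>(X ` T))"
    if "T \<subseteq> {..<k}" for T
    using that assms by (auto simp: override_on_def fun_eq_iff)
  then show ?thesis
    unfolding box_product_def by (intro prod.cong) auto
qed

context product_distribution
begin

lemma norm_E_E_squared_le_resampled:
  "(cmod (E (\<lambda>x. E (\<lambda>x'. G x x'))))\<^sup>2
     \<le> E (\<lambda>x. E (\<lambda>x'. (cmod (E (\<lambda>y. G (override_on x y S) x')))\<^sup>2))"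
proof -
  have swap: "E (\<lambda>y. E (\<lambda>x'. G (override_on x y S) x')) = E (\<lambda>x'. E (\<lambda>y. G (override_on x y S) x'))"
    for x by (rule E_swap)
  have "E (\<lambda>x. E (\<lambda>x'. G x x')) = E (\<lambda>x. E (\<lambda>y. E (\<lambda>x'. G (override_on x y S) x')))"
    by (rule E_resample[symmetric])
  also have "\<dots> = E (\<lambda>x. E (\<lambda>x'. E (\<lambda>y. G (override_on x y S) x')))"
    by (simp only: swap)
  finally have "(cmod (E (\<lambda>x. E (\<lambda>x'. G x x'))))\<^sup>2
      \<le> E (\<lambda>x. (cmod (E (\<lambda>x'. E (\<lambda>y. G (override_on x y S) x'))))\<^sup>2)"
    using norm_E_squared_le by simp
  also have "\<dots> \<le> E (\<lambda>x. E (\<lambda>x'. (cmod (E (\<lambda>y. G (override_on x y S) x')))\<^sup>2))"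
    by (intro E_mono norm_E_squared_le)
  finally show ?thesis .
qed

lemma E_E_norm_resampled_squared:
  assumes "\<And>x x' y. G x (override_on x' y S) = G x x'"
  shows "complex_of_real (E (\<lambda>x. E (\<lambda>x'. (cmod (E (\<lambda>y. G (override_on x y S) x')))\<^sup>2)))
     = E (\<lambda>x. E (\<lambda>x'. G x x' * cnj (G (override_on x x' S) x')))"
proof -
  define K where "K a b = G a b * cnj (G (override_on a b S) b)" for a b
  have square: "complex_of_real ((cmod (E (\<lambda>y. G (override_on x y S) x')))\<^sup>2)
      = E (\<lambda>y. E (\<lambda>y'. K (override_on x y S) (override_on x' y' S)))" for x x'
  proof -
    have "override_on (override_on x y S) (override_on x' y' S) S = override_on x y' S" for y y'
      by (auto simp: override_on_def)
    then have "K (override_on x y S) (override_on x' y' S)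
        = G (override_on x y S) x' * cnj (G (override_on x y' S) x')" for y y'
      by (simp add: K_def assms)
    then show ?thesis
      unfolding complex_norm_square cnj_E E_mult_E by simp
  qed
  have swap: "E (\<lambda>x'. E (\<lambda>y. H x' y)) = E (\<lambda>y. E (\<lambda>x'. H x' y))" for H :: "_ \<Rightarrow> _ \<Rightarrow> complex"
    by (rule E_swap)
  have "complex_of_real (E (\<lambda>x. E (\<lambda>x'. (cmod (E (\<lambda>y. G (override_on x y S) x')))\<^sup>2)))
      = E (\<lambda>x. E (\<lambda>x'. E (\<lambda>y. E (\<lambda>y'. K (override_on x y S) (override_on x' y' S)))))"
    by (simp only: square flip: E_of_real)
  also have "\<dots> = E (\<lambda>x. E (\<lambda>y. E (\<lambda>x'. E (\<lambda>y'. K (override_on x y S) (override_on x' y' S)))))"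
    by (simp only: swap[of "\<lambda>x' y. E (\<lambda>y'. K (override_on _ y S) (override_on x' y' S))"])
  also have "\<dots> = E (\<lambda>x. E (\<lambda>y. E (\<lambda>x'. K (override_on x y S) x')))"
    by (simp only: E_resample[of "K (override_on _ _ S)"])
  also have "\<dots> = E (\<lambda>x. E (\<lambda>x'. K x x'))"
    by (rule E_resample[of "\<lambda>a. E (K a)"])
  finally show ?thesis
    unfolding K_def .
qed

definition box_average :: "(('i \<Rightarrow> 'a) \<Rightarrow> complex) \<Rightarrow> (nat \<Rightarrow> 'i set) \<Rightarrow> nat \<Rightarrow> complex" where
  "box_average f X k = E (\<lambda>x. E (\<lambda>x'. box_product f X k x x'))"

lemma box_average_Suc:
  assumes "\<And>i. i < k \<Longrightarrow> X i \<inter> X k = {}"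
  shows "box_average f X (Suc k) = complex_of_real
    (E (\<lambda>x. E (\<lambda>x'. (cmod (E (\<lambda>y. box_product f X k (override_on x y (X k)) x')))\<^sup>2)))"
  unfolding box_average_def box_product_Suc
  by (rule E_E_norm_resampled_squared[symmetric], rule box_product_override_on, rule assms)

lemma norm_box_average_squared_le:
  assumes "\<And>i. i < k \<Longrightarrow> X i \<inter> X k = {}"
  shows "(cmod (box_average f X k))\<^sup>2 \<le> cmod (box_average f X (Suc k))"
proof -
  let ?R = "E (\<lambda>x. E (\<lambda>x'. (cmod (E (\<lambda>y. box_product f X k (override_on x y (X k)) x')))\<^sup>2))"
  have "(cmod (box_average f X k))\<^sup>2 \<le> ?R"
    unfolding box_average_def by (rule norm_E_E_squared_le_resampled)
  moreover have "0 \<le> ?R"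
    by (intro E_nonneg) simp
  moreover have "box_average f X (Suc k) = complex_of_real ?R"
    by (rule box_average_Suc) (rule assms)
  ultimately show ?thesis
    by simp
qed

lemma norm_E_power_le_box_average:
  assumes "disjoint_family_on X {..<k}"
  shows "(cmod (E f))^(2^k) \<le> cmod (box_average f X k)"
  using assms
proof (induction k)
  case 0
  then show ?case
    by (simp add: box_average_def)
next
  case (Suc k)
  have "(cmod (E f))^(2^Suc k) = ((cmod (E f))^(2^k))\<^sup>2"
    by (simp add: power_mult[symmetric] mult.commute)
  also have "\<dots> \<le> (cmod (box_average f X k))\<^sup>2"
    using Suc by (intro power_mono) (auto simp: disjoint_family_on_def)
  also have "\<dots> \<le> cmod (box_average f X (Suc k))"
    using Suc.prems by (intro norm_box_average_squared_le) (auto simp: disjoint_family_on_def)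
  finally show ?case .
qed

lemma E_power_le_box_average:
  assumes "disjoint_family_on X {..<k}" and "0 < k"
  shows "complex_of_real ((cmod (E f))^(2^k)) \<le> box_average f X k"
proof -
  obtain j where k: "k = Suc j"
    using \<open>0 < k\<close> by (cases k) auto
  have "\<And>i. i < j \<Longrightarrow> X i \<inter> X j = {}"
    using assms(1) by (auto simp: k disjoint_family_on_def)
  then have real: "complex_of_real (cmod (box_average f X k)) = box_average f X k"
    unfolding k by (simp add: box_average_Suc E_nonneg)
  have "complex_of_real ((cmod (E f))^(2^k)) \<le> complex_of_real (cmod (box_average f X k))"
    using norm_E_power_le_box_average[OF assms(1), of f] by (simp add: less_eq_complex_def)
  then show ?thesis
    unfolding real .
qed

end

section \<open>Alternating sums of polynomials over a cube\<close>

lemma alternating_sum_Pow_eq_0: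
  fixes h :: "'a set \<Rightarrow> 'b::comm_ring_1"
  assumes "finite K" and "i \<in> K" and "\<And>T. T \<subseteq> K - {i} \<Longrightarrow> h (insert i T) = h T"
  shows "(\<Sum>T\<in>Pow K. (-1)^card T * h T) = 0"
proof -
  define K' where "K' = K - {i}"
  have K: "K = insert i K'" and "i \<notin> K'" and "finite K'"
    using assms(1,2) by (auto simp: K'_def)
  have inj: "inj_on (insert i) (Pow K')"
    using \<open>i \<notin> K'\<close> by (intro inj_onI) (metis Pow_iff insert_ident subsetD)
  have "(-1)^card (insert i T) * h (insert i T) = - ((-1)^card T * h T)" if "T \<in> Pow K'" for T
  proof -
    from that have "finite T" and "i \<notin> T"
      using \<open>i \<notin> K'\<close> \<open>finite K'\<close> finite_subset by auto
    then show ?thesis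
      using that assms(3) by (simp add: K'_def)
  qed
  then show ?thesis
    unfolding K Pow_insert using \<open>i \<notin> K'\<close> \<open>finite K'\<close>
    by (subst sum.union_disjoint) (auto simp: sum.reindex[OF inj] sum_negf)
qed

definition monomial :: "nat \<Rightarrow> (nat \<Rightarrow> nat) \<Rightarrow> (nat \<Rightarrow> 'a::comm_semiring_1) \<Rightarrow> 'a" where
  "monomial n s z = (\<Prod>u<n. z u ^ s u)"

lemma poly_eval_eq_sum_monomial: "poly_eval n M c z = (\<Sum>s\<in>M. c s * monomial n s z)"
  unfolding poly_eval_def monomial_def ..

lemma monomial_mod_cong:
  fixes z z' :: "nat \<Rightarrow> 'a::euclidean_semiring_cancel"
  assumes "\<And>u. u < n \<Longrightarrow> z u mod m = z' u mod m"
  shows "monomial n s z mod m = monomial n s z' mod m"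
proof -
  have "monomial n s z mod m = (\<Prod>u<n. (z u mod m) ^ s u mod m) mod m" for z :: "nat \<Rightarrow> 'a"
    unfolding monomial_def by (simp add: power_mod mod_prod_eq)
  then show ?thesis
    using assms by simp
qed

lemma monomial_eq_prod_transversal:
  fixes s :: "nat \<Rightarrow> nat"
  assumes deg: "(\<Sum>u<n. s u) \<le> d" and disj: "disjoint_family_on X {..<d}"
    and cover: "(\<Union>i<d. X i) \<subseteq> {..<n}" and meets: "\<And>i. i < d \<Longrightarrow> \<exists>u\<in>X i. 1 \<le> s u"
  obtains t where "\<And>i. i < d \<Longrightarrow> t i \<in> X i"
    and "\<And>z :: nat \<Rightarrow> 'a::comm_semiring_1. monomial n s z = (\<Prod>i<d. z (t i))"
proof -
  obtain t where t: "\<And>i. i < d \<Longrightarrow> t i \<in> X i \<and> 1 \<le> s (t i)"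
    using meets by metis
  have inj: "inj_on t {..<d}"
    using t disj by (intro inj_onI) (metis disjoint_family_onD disjoint_iff lessThan_iff)
  define U where "U = t ` {..<d}"
  have U: "U \<subseteq> {..<n}"
    using t cover by (auto simp: U_def)
  have sum_U: "(\<Sum>u\<in>U. f u) = (\<Sum>i<d. f (t i))" and prod_U: "(\<Prod>u\<in>U. g u) = (\<Prod>i<d. g (t i))"
    for f :: "nat \<Rightarrow> nat" and g :: "nat \<Rightarrow> 'a"
    unfolding U_def by (simp_all add: sum.reindex[OF inj] prod.reindex[OF inj])
  have split: "(\<Sum>u<n. s u) = (\<Sum>i<d. s (t i)) + (\<Sum>u\<in>{..<n} - U. s u)"
    using U by (simp add: sum.subset_diff[of U] sum_U)
  \<comment> \<open>The d chosen variables already use up the whole degree budget.\<close>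
  have "d \<le> (\<Sum>i<d. s (t i))"
    using sum_mono[of "{..<d}" "\<lambda>_. 1" "\<lambda>i. s (t i)"] t by simp
  then have outside: "(\<Sum>u\<in>{..<n} - U. s u) = 0" and inside: "(\<Sum>i<d. s (t i)) = d"
    using deg split by linarith+
  have ones: "s (t i) = 1" if "i < d" for i
  proof (rule ccontr)
    assume "s (t i) \<noteq> 1"
    with t[OF that] have "1 < s (t i)"
      by simp
    with t that have "(\<Sum>i<d. 1) < (\<Sum>i<d. s (t i))"
      by (intro sum_strict_mono_ex1) auto
    with inside show False by simp
  qed
  have "monomial n s z = (\<Prod>i<d. z (t i))" for z :: "nat \<Rightarrow> 'a"
  proof -
    have "monomial n s z = (\<Prod>u\<in>U. z u ^ s u) * (\<Prod>u\<in>{..<n} - U. z u ^ s u)"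
      unfolding monomial_def using U by (simp add: prod.subset_diff[of U] mult.commute)
    also have "\<dots> = (\<Prod>i<d. z (t i))"
      using outside ones by (simp add: prod_U)
    finally show ?thesis .
  qed
  with t that show ?thesis by blast
qed

lemma alternating_sum_monomial:
  fixes s :: "nat \<Rightarrow> nat" and x x' :: "nat \<Rightarrow> 'a::comm_ring_1"
  assumes "(\<Sum>u<n. s u) \<le> d" and disj: "disjoint_family_on X {..<d}"
    and "(\<Union>i<d. X i) \<subseteq> {..<n}" and "\<And>i. i < d \<Longrightarrow> \<exists>u\<in>X i. 1 \<le> s u"
  shows "(\<Sum>T\<in>Pow {..<d}. (-1)^card T * monomial n s (override_on x x' (\<Union>(X ` T))))
    = monomial n s (\<lambda>u. x u - x' u)"
proof -
  obtain t where t: "\<And>i. i < d \<Longrightarrow> t i \<in> X i"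
    and mon: "\<And>z :: nat \<Rightarrow> 'a. monomial n s z = (\<Prod>i<d. z (t i))"
    using monomial_eq_prod_transversal[OF assms] by blast
  have "monomial n s (override_on x x' (\<Union>(X ` T))) = (\<Prod>i\<in>T. x' (t i)) * (\<Prod>i\<in>{..<d} - T. x (t i))"
    if "T \<subseteq> {..<d}" for T
  proof -
    have "t i \<in> \<Union>(X ` T) \<longleftrightarrow> i \<in> T" if "i < d" for i
    proof
      assume "t i \<in> \<Union>(X ` T)"
      then obtain j where "j \<in> T" "t i \<in> X j"
        by auto
      with \<open>T \<subseteq> {..<d}\<close> t[OF \<open>i < d\<close>] \<open>i < d\<close> show "i \<in> T"
        by (metis disj disjoint_family_onD disjoint_iff lessThan_iff subsetD)
    qed (use t that in auto)
    then have "monomial n s (override_on x x' (\<Union>(X ` T))) = (\<Prod>i<d. if i \<in> T then x' (t i) else x (t i))"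
      unfolding mon by (intro prod.cong) auto
    also have "\<dots> = (\<Prod>i\<in>T. x' (t i)) * (\<Prod>i\<in>{..<d} - T. x (t i))"
      using that by (simp add: prod.If_cases Int_absorb1 Diff_eq)
    finally show ?thesis .
  qed
  then have "(\<Sum>T\<in>Pow {..<d}. (-1)^card T * monomial n s (override_on x x' (\<Union>(X ` T))))
      = (\<Prod>i<d. x (t i) - x' (t i))"
    by (simp add: prod_diff_conv_sum mult.assoc)
  also have "\<dots> = monomial n s (\<lambda>u. x u - x' u)"
    by (simp add: mon)
  finally show ?thesis .
qed

lemma alternating_sum_monomial_missing_part:
  fixes x x' :: "nat \<Rightarrow> 'a::comm_ring_1" and d :: nat
  assumes "i < d" and "\<And>u. u \<in> X i \<Longrightarrow> s u = 0"
  shows "(\<Sum>T\<in>Pow {..<d}. (-1)^card T * monomial n s (override_on x x' (\<Union>(X ` T)))) = 0"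
proof (rule alternating_sum_Pow_eq_0)
  fix T
  have "override_on x x' (\<Union>(X ` insert i T)) u ^ s u = override_on x x' (\<Union>(X ` T)) u ^ s u" for u
    using assms(2) by (cases "u \<in> X i") (auto simp: override_on_def)
  then show "monomial n s (override_on x x' (\<Union>(X ` insert i T)))
      = monomial n s (override_on x x' (\<Union>(X ` T)))"
    unfolding monomial_def by simp
qed (use assms(1) in auto)

lemma is_partitionD:
  assumes "is_partition n d X"
  shows "disjoint_family_on X {..<d}" and "(\<Union>i<d. X i) \<subseteq> {..<n}"
  using assms by (auto simp: is_partition_def disjoint_family_on_def)

lemma alternating_sum_term_cong:
  fixes x x' :: "nat \<Rightarrow> int"
  assumes deg: "is_poly_deg_le p n M c d" and part: "is_partition n d X" and "s \<in> M"
  shows "c s * (\<Sum>T\<in>Pow {..<d}. (-1)^card T * monomial n s (override_on x x' (\<Union>(X ` T)))) mod int p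
    = (if s \<in> restrict_mons p M c d X
       then c s * monomial n s (\<lambda>u\<in>{..<n}. (x u - x' u) mod int p) else 0) mod int p"
    (is "c s * ?alt mod _ = (if _ then c s * monomial n s ?y else 0) mod _")
proof (cases "s \<in> restrict_mons p M c d X")
  case True
  then have "(\<Sum>u<n. s u) \<le> d"
    using deg by (auto simp: is_poly_deg_le_def restrict_mons_def)
  with True have "?alt = monomial n s (\<lambda>u. x u - x' u)"
    using is_partitionD[OF part] by (intro alternating_sum_monomial) (auto simp: restrict_mons_def)
  moreover have "monomial n s (\<lambda>u. x u - x' u) mod int p = monomial n s ?y mod int p"
    by (rule monomial_mod_cong) simp
  ultimately have "?alt mod int p = monomial n s ?y mod int p"
    by simp
  with True show ?thesis
    by (auto intro: mod_mult_cong)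
next
  case False
  with \<open>s \<in> M\<close> consider "c s mod int p = 0" | i where "i < d" "\<And>u. u \<in> X i \<Longrightarrow> s u = 0"
    by (auto simp: restrict_mons_def not_le)
  then show ?thesis
  proof cases
    case 1
    with False show ?thesis
      by (simp add: mod_eq_0_iff_dvd)
  next
    case 2
    then have "?alt = 0"
      by (rule alternating_sum_monomial_missing_part)
    with False show ?thesis
      by simp
  qed
qed

lemma alternating_sum_poly_eval_cong:
  assumes "is_poly_deg_le p n M c d" and "is_partition n d X"
  shows "(\<Sum>T\<in>Pow {..<d}. (-1)^card T * poly_eval n M c (override_on x x' (\<Union>(X ` T)))) mod int p
    = poly_eval n (restrict_mons p M c d X) c (\<lambda>u\<in>{..<n}. (x u - x' u) mod int p) mod int p"
proof -
  define y where "y = (\<lambda>u\<in>{..<n}. (x u - x' u) mod int p)"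
  define alt where
    "alt s = (\<Sum>T\<in>Pow {..<d}. (-1)^card T * monomial n s (override_on x x' (\<Union>(X ` T))))" for s
  have "finite M"
    using assms(1) by (simp add: is_poly_deg_le_def)
  have "(\<Sum>T\<in>Pow {..<d}. (-1)^card T * poly_eval n M c (override_on x x' (\<Union>(X ` T))))
      = (\<Sum>s\<in>M. c s * alt s)"
    unfolding poly_eval_eq_sum_monomial alt_def
    by (simp add: sum_distrib_left mult_ac sum.swap[of _ "Pow {..<d}" M])
  also have "\<dots> mod int p = (\<Sum>s\<in>M. c s * alt s mod int p) mod int p"
    by (rule mod_sum_eq[symmetric])
  also have "(\<Sum>s\<in>M. c s * alt s mod int p)
      = (\<Sum>s\<in>M. (if s \<in> restrict_mons p M c d X then c s * monomial n s y else 0) mod int p)"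
    unfolding alt_def y_def using alternating_sum_term_cong[OF assms] by (intro sum.cong) auto
  also have "\<dots> mod int p
      = (\<Sum>s\<in>M. if s \<in> restrict_mons p M c d X then c s * monomial n s y else 0) mod int p"
    by (rule mod_sum_eq)
  also have "(\<Sum>s\<in>M. if s \<in> restrict_mons p M c d X then c s * monomial n s y else 0)
      = poly_eval n (restrict_mons p M c d X) c y"
    unfolding poly_eval_eq_sum_monomial restrict_mons_def using \<open>finite M\<close>
    by (simp add: sum.inter_filter)
  finally show ?thesis
    unfolding y_def .
qed

section \<open>Roots of unity\<close>

lemma omega_add: "omega p (a + b) = omega p a * omega p b"
  unfolding omega_def cis_mult by (simp add: add_divide_distrib distrib_left)

lemma omega_0 [simp]: "omega p 0 = 1"
  by (simp add: omega_def)

lemma prod_omega: "(\<Prod>T\<in>A. omega p (g T)) = omega p (\<Sum>T\<in>A. g T)"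
  by (induction A rule: infinite_finite_induct) (simp_all add: omega_add)

lemma funpow_cnj_omega: "(cnj ^^ m) (omega p a) = omega p ((-1)^m * a)"
  by (induction m) (simp_all add: omega_def cis_cnj)

lemma omega_mod: "omega p (a mod int p) = omega p a"
proof (cases "p = 0")
  case False
  have "omega p (int p * k) = 1" for k
  proof -
    have "omega p (int p * k) = cis (2 * pi * of_int k)"
      using False by (simp add: omega_def mult.assoc del: cis_multiple_2pi)
    also have "\<dots> = 1"
      by (rule cis_multiple_2pi) simp
    finally show ?thesis .
  qed
  then show ?thesis
    by (metis add.right_neutral div_mult_mod_eq mult.commute omega_add mult_1_right)
qed simp

lemma box_product_omega:
  "box_product (\<lambda>x. omega p (P x)) X k x x'
     = omega p (\<Sum>T\<in>Pow {..<k}. (-1)^card T * P (override_on x x' (\<Union>(X ` T))))"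
  unfolding box_product_def funpow_cnj_omega prod_omega ..

theorem proposition3p7:
  fixes p n d :: nat and D :: "int \<Rightarrow> real"
    and M :: "(nat \<Rightarrow> nat) set" and c :: "(nat \<Rightarrow> nat) \<Rightarrow> int"
    and X :: "nat \<Rightarrow> nat set"
  assumes "prime p" and "p \<ge> 3" and "d \<ge> 2"
    and "is_distr p D"
    and "is_poly_deg_le p n M c d"
    and "is_partition n d X"
  shows "complex_of_real (cmod (expect_prod p n D (\<lambda>x. omega p (poly_eval n M c x))) ^ (2 ^ d))
     \<le> expect_prod p n (diff_distr p D)
          (\<lambda>x. omega p (poly_eval n (restrict_mons p M c d X) c x))"
proof -
  interpret product_distribution "{..<n}" "{0..<int p}" D
    using \<open>is_distr p D\<close> by unfold_locales (auto simp: is_distr_def)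
  have expect_prod_eq: "expect_prod p n D' g = prod_expectation {..<n} {0..<int p} D' g" for D' g
    by (simp add: expect_prod_def prod_expectation_def prod_weight_def Fp_vecs_def scaleR_conv_of_real)
  define f where "f x = omega p (poly_eval n M c x)" for x
  define P' where "P' = poly_eval n (restrict_mons p M c d X) c"
  have "box_product f X d x x' = omega p (P' (\<lambda>u\<in>{..<n}. (x u - x' u) mod int p))" for x x'
    unfolding f_def P'_def box_product_omega
    by (subst (1 2) omega_mod[symmetric]) (simp only: alternating_sum_poly_eval_cong[OF assms(5,6)])
  then have "box_average f X d = E (\<lambda>x. E (\<lambda>x'. omega p (P' (\<lambda>u\<in>{..<n}. (x u - x' u) mod int p))))"
    by (simp add: box_average_def)
  also have "\<dots> = expect_prod p n (diff_distr p D) (\<lambda>y. omega p (P' y))"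
    unfolding expect_prod_eq diff_distr_def
    by (rule E_E_coordinatewise_map) (use \<open>p \<ge> 3\<close> in auto)
  finally have box_average_eq: "box_average f X d = \<dots>" .
  have "complex_of_real (cmod (expect_prod p n D f) ^ 2 ^ d) \<le> box_average f X d"
    unfolding expect_prod_eq using \<open>d \<ge> 2\<close>
    by (intro E_power_le_box_average[OF is_partitionD(1)[OF assms(6)]]) simp
  then show ?thesis
    unfolding box_average_eq f_def P'_def .
qed

end
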